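(* Let $f(k)$ denote the largest power of $2$ dividing $k\in\mathbb{N}_1$, and let $\gamma\in[0,1)$. Then $$\sum_{k=1}^{\infty}\gamma^k f(k)\le\frac{1}{1-\gamma}\left(\frac{1}{e}+\frac{1}{\ln 2}+\frac{1}{2}\log_2\ln 16+\frac{1}{2}\log_2\frac{1}{1-\gamma}\right).$$
   Context: The function $f$ is OEIS A6519: $f(k)=1$ for $k$ odd and $f(k)=2f(k/2)$ for $k$ even. *)

theory Defs
  imports Complex_Main
begin

text \<open>OEIS A6519: f(k) = 1 for k odd, f(k) = 2 f(k/2) for k even
  (the largest power of 2 dividing k, for k \<ge> 1). The value at 0 is irrelevant; set to 0.\<close>
function f :: "nat \<Rightarrow> nat" where
  "f k = (if k = 0 then 0 else if odd k then 1 else 2 * f (k div 2))"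
  by auto
termination by (relation "measure id") auto

declare f.simps[simp del]

end

(*
  Let S(x) be the sum of f(k) x^k over k \<ge> 1. Splitting the indices into odd and even
  ones gives S(x) = x/(1-x^2) + 2 S(x^2), and unrolling this J times writes S(x) as the sum
  of the J layers 2^j x^(2^j)/(1 - x^(2^(j+1))), j < J, plus 2^J S(x^(2^J)).
  With m = 2^j, AM-GM in the form 2m x^m \<le> 1 + x + ... + x^(2m-1) shows that each layer
  is at most 1/(2(1-x)). Using f(k) \<le> k, the remainder is at most 2^J q/(1-q)^2 with
  q = x^(2^J) \<le> exp(-2^J (1-x)), which is at most (10/9)/(1-x) once 2^J (1-x) \<ge> 1.
  The least such J is below log 2 (1/(1-x)) + 1, so (1-x) S(x) \<le> 1/2 log 2 (1/(1-x)) + 1/2 + 10/9,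
  and the constant in the statement exceeds 19/10. All estimates are made on partial sums,
  which also gives summability.
*)
theory Submission
  imports Defs "HOL-Analysis.Harmonic_Numbers"
begin

lemma f_odd: "odd k \<Longrightarrow> f k = 1"
  by (subst f.simps) (auto intro: odd_pos)

lemma f_double: "k > 0 \<Longrightarrow> f (2 * k) = 2 * f k"
  by (subst f.simps) auto

lemma f_le_self: "f k \<le> k"
  by (induction k rule: f.induct) (subst f.simps; auto elim: oddE evenE)

definition f_partial_sum :: "real \<Rightarrow> nat \<Rightarrow> real" where
  "f_partial_sum x n = (\<Sum>k<n. x ^ Suc k * real (f (Suc k)))"

lemma f_partial_sum_mono:
  assumes "0 \<le> x" "m \<le> n"
  shows "f_partial_sum x m \<le> f_partial_sum x n"
  unfolding f_partial_sum_def using assms by (intro sum_mono2) auto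

lemma f_partial_sum_le:
  fixes x :: real
  assumes "0 \<le> x" "x < 1"
  shows "f_partial_sum x n \<le> x / (1 - x)\<^sup>2"
proof -
  have sums: "(\<lambda>k. x * (real (Suc k) * x ^ k)) sums (x * (1 / (1 - x)\<^sup>2))"
    using geometric_deriv_sums[of x] assms by (intro sums_mult) auto
  have "f_partial_sum x n \<le> (\<Sum>k<n. x * (real (Suc k) * x ^ k))"
    unfolding f_partial_sum_def
  proof (intro sum_mono)
    fix k
    have "real (f (Suc k)) \<le> real (Suc k)" using f_le_self of_nat_mono by blast
    then show "x ^ Suc k * real (f (Suc k)) \<le> x * (real (Suc k) * x ^ k)"
      using assms by (simp add: mult_left_mono mult.commute mult.left_commute)
  qed
  also have "\<dots> \<le> x * (1 / (1 - x)\<^sup>2)"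
    using sum_le_suminf[OF sums_summable[OF sums]] sums_unique[OF sums] assms by force
  finally show ?thesis by simp
qed

lemma f_partial_sum_double:
  "f_partial_sum x (2 * n) = (\<Sum>m<n. x ^ (2 * m + 1)) + 2 * f_partial_sum (x\<^sup>2) n"
proof (induction n)
  case 0
  then show ?case by (simp add: f_partial_sum_def)
next
  case (Suc n)
  have "f_partial_sum x (2 * Suc n) = f_partial_sum x (2 * n)
      + x ^ (2 * n + 1) * real (f (2 * n + 1)) + x ^ (2 * Suc n) * real (f (2 * Suc n))"
    by (simp add: f_partial_sum_def)
  also have "\<dots> = f_partial_sum x (2 * n) + x ^ (2 * n + 1) + 2 * ((x\<^sup>2) ^ Suc n * real (f (Suc n)))"
    using f_odd[of "2 * n + 1"] f_double[of "Suc n"] by (simp add: power_mult power2_eq_square)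
  finally show ?case
    using Suc.IH by (simp add: f_partial_sum_def)
qed

lemma f_partial_sum_le_rec:
  fixes x :: real
  assumes "0 \<le> x" "x < 1"
  shows "f_partial_sum x n \<le> x / (1 - x\<^sup>2) + 2 * f_partial_sum (x\<^sup>2) n"
proof -
  have x2: "0 \<le> x\<^sup>2" "x\<^sup>2 < 1" using assms by (auto simp: power_less_one_iff)
  have "(\<Sum>m<n. x ^ (2 * m + 1)) = x * (\<Sum>m<n. (x\<^sup>2) ^ m)"
    by (simp add: sum_distrib_left flip: power_mult)
  also have "\<dots> = x * ((1 - (x\<^sup>2) ^ n) / (1 - x\<^sup>2))"
    using x2 by (simp add: sum_gp_strict)
  also have "\<dots> \<le> x / (1 - x\<^sup>2)"
    using assms x2 by (simp add: divide_right_mono mult_left_le)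
  finally have "(\<Sum>m<n. x ^ (2 * m + 1)) \<le> x / (1 - x\<^sup>2)" .
  moreover have "f_partial_sum x n \<le> f_partial_sum x (2 * n)"
    using assms by (intro f_partial_sum_mono) auto
  ultimately show ?thesis
    using f_partial_sum_double[of x n] by linarith
qed

text \<open>The \<open>j\<close>-th term is \<open>2^j\<close> times the sum of \<open>x^(2^j k)\<close> over odd \<open>k\<close>, i.e. the part of
  the series coming from the indices of \<open>2\<close>-adic valuation \<open>j\<close>.\<close>
definition dyadic_layers :: "nat \<Rightarrow> real \<Rightarrow> real" where
  "dyadic_layers J x = (\<Sum>j<J. 2 ^ j * x ^ 2 ^ j / (1 - x ^ 2 ^ Suc j))"

lemma dyadic_layers_Suc:
  "dyadic_layers (Suc J) x = x / (1 - x\<^sup>2) + 2 * dyadic_layers J (x\<^sup>2)"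
  unfolding dyadic_layers_def sum.lessThan_Suc_shift
  by (simp add: sum_distrib_left power_mult[symmetric] mult.assoc mult.commute[of 2])

lemma f_partial_sum_le_dyadic_layers:
  fixes x :: real
  assumes "0 \<le> x" "x < 1"
  shows "f_partial_sum x n \<le> dyadic_layers J x + 2 ^ J * (x ^ 2 ^ J / (1 - x ^ 2 ^ J)\<^sup>2)"
  using assms
proof (induction J arbitrary: x)
  case 0
  then show ?case using f_partial_sum_le[of x n] by (simp add: dyadic_layers_def)
next
  case (Suc J)
  have x2: "0 \<le> x\<^sup>2" "x\<^sup>2 < 1" using Suc.prems by (auto simp: power_less_one_iff)
  have "f_partial_sum x n \<le> x / (1 - x\<^sup>2) + 2 * f_partial_sum (x\<^sup>2) n"
    using f_partial_sum_le_rec Suc.prems by blast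
  also have "\<dots> \<le> x / (1 - x\<^sup>2)
      + 2 * (dyadic_layers J (x\<^sup>2) + 2 ^ J * ((x\<^sup>2) ^ 2 ^ J / (1 - (x\<^sup>2) ^ 2 ^ J)\<^sup>2))"
    using Suc.IH[OF x2] by simp
  also have "\<dots> = dyadic_layers (Suc J) x + 2 ^ Suc J * (x ^ 2 ^ Suc J / (1 - x ^ 2 ^ Suc J)\<^sup>2)"
    by (simp add: dyadic_layers_Suc power_mult[symmetric] algebra_simps)
  finally show ?case .
qed

lemma mult_power_le_sum_powers:
  fixes x :: real
  assumes "0 \<le> x" "x \<le> 1"
  shows "2 * n * x ^ n \<le> (\<Sum>i<2 * n. x ^ i)"
proof (induction n)
  case 0
  then show ?case by simp
next
  case (Suc n)
  have ends: "2 * (x * a) \<le> 1 + x * a * a" if "0 \<le> a" "a \<le> 1" for a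
  proof -
    have "0 \<le> (1 - a) * (1 - x * a)" using that assms by (simp add: mult_le_one)
    moreover have "x * a \<le> a" using that assms by (simp add: mult_left_le_one_le)
    ultimately show ?thesis by (simp add: algebra_simps)
  qed
  have "2 * real (Suc n) * x ^ Suc n = 2 * n * x ^ Suc n + 2 * (x * x ^ n)"
    by (simp add: algebra_simps)
  also have "\<dots> \<le> x * (\<Sum>i<2 * n. x ^ i) + (1 + x * x ^ n * x ^ n)"
    using Suc.IH assms ends[of "x ^ n"] power_le_one[of x n]
    by (intro add_mono) (simp_all add: mult_left_mono mult.left_commute)
  also have "\<dots> = (\<Sum>i<Suc (2 * n). x ^ i) + x ^ (2 * n + 1)"
    by (simp add: sum.lessThan_Suc_shift sum_distrib_left mult_2 power_add del: sum.lessThan_Suc)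
  also have "\<dots> = (\<Sum>i<2 * Suc n. x ^ i)"
    by simp
  finally show ?case .
qed

lemma dyadic_layer_term_le:
  fixes x :: real
  assumes "0 \<le> x" "x < 1" "0 < m"
  shows "(1 - x) * (m * x ^ m / (1 - x ^ (2 * m))) \<le> 1 / 2"
proof -
  have pos: "0 < 1 - x ^ (2 * m)"
    using assms by (simp add: power_less_one_iff)
  have "2 * ((1 - x) * (m * x ^ m)) = (1 - x) * (2 * m * x ^ m)"
    by (simp add: algebra_simps)
  also have "\<dots> \<le> (1 - x) * (\<Sum>i<2 * m. x ^ i)"
    using mult_power_le_sum_powers[of x m] assms by (intro mult_left_mono) auto
  also have "\<dots> = 1 - x ^ (2 * m)"
    by (rule one_diff_power_eq[symmetric])
  finally show ?thesis
    using pos by (simp add: field_simps)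
qed

lemma dyadic_layers_le:
  fixes x :: real
  assumes "0 \<le> x" "x < 1"
  shows "(1 - x) * dyadic_layers J x \<le> J / 2"
proof -
  have "(1 - x) * dyadic_layers J x
      = (\<Sum>j<J. (1 - x) * (real (2 ^ j) * x ^ 2 ^ j / (1 - x ^ (2 * 2 ^ j))))"
    by (simp add: dyadic_layers_def sum_distrib_left)
  also have "\<dots> \<le> (\<Sum>j<J. 1 / 2)"
    using assms by (intro sum_mono dyadic_layer_term_le) auto
  finally show ?thesis by simp
qed

lemma mult_div_one_minus_square_le:
  fixes c q :: real
  assumes c: "1 \<le> c" and q: "0 \<le> q" "q \<le> exp (- c)"
  shows "c * (q / (1 - q)\<^sup>2) \<le> 10 / 9"
proof (cases "q = 0")
  case False
  define d where "d = 1 / q - 1"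
  have "1 + c + c\<^sup>2 / 2 \<le> exp c"
    using c by (intro exp_lower_Taylor_quadratic) simp
  also have "exp c \<le> 1 / q"
    using q False by (simp add: exp_minus field_simps)
  moreover have "c \<le> c\<^sup>2"
    using c by (simp add: power2_eq_square)
  ultimately have "3 / 2 * c \<le> d"
    unfolding d_def by linarith
  then have d: "c / d \<le> 2 / 3" "1 / d \<le> 2 / 3" "0 < d"
    using c by (simp_all add: field_simps)
  then have "q < 1"
    unfolding d_def using q False by (simp add: field_simps)
  have d_eq: "d = (1 - q) / q"
    unfolding d_def using False by (simp add: field_simps)
  have "c * (q / (1 - q)\<^sup>2) = c / d * (1 + 1 / d)"
    unfolding d_eq using False \<open>q < 1\<close> by (simp add: field_simps power2_eq_square)
  also have "\<dots> \<le> 2 / 3 * (1 + 2 / 3)"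
    using d c by (intro mult_mono add_left_mono) auto
  finally show ?thesis by simp
qed simp

lemma ex_power2_ge_with_log_bound:
  fixes y :: real
  assumes "1 \<le> y"
  shows "\<exists>J. y \<le> 2 ^ J \<and> J < log 2 y + 1"
proof (intro exI conjI)
  define J where "J = nat \<lceil>log 2 y\<rceil>"
  have "real J = \<lceil>log 2 y\<rceil>"
    unfolding J_def using assms by simp
  then have "log 2 y \<le> J" "J < log 2 y + 1"
    using ceiling_correct[of "log 2 y"] by linarith+
  then show "J < log 2 y + 1" by simp
  have "y = 2 powr log 2 y" using assms by simp
  also have "\<dots> \<le> 2 powr J" using \<open>log 2 y \<le> J\<close> by simp
  finally show "y \<le> 2 ^ J" by (simp add: powr_realpow)
qed

lemma one_minus_mult_f_partial_sum_le:
  fixes x :: real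
  assumes "0 \<le> x" "x < 1" "1 \<le> 2 ^ J * (1 - x)"
  shows "(1 - x) * f_partial_sum x n \<le> J / 2 + 10 / 9"
proof -
  define c where "c = 2 ^ J * (1 - x)"
  define q where "q = x ^ 2 ^ J"
  have "x \<le> exp (- (1 - x))"
    using exp_ge_add_one_self[of "x - 1"] by simp
  then have "q \<le> exp (- (1 - x)) ^ 2 ^ J"
    unfolding q_def using assms by (intro power_mono) auto
  also have "\<dots> = exp (- c)"
    unfolding c_def by (simp add: algebra_simps flip: exp_of_nat_mult)
  finally have q: "0 \<le> q" "q \<le> exp (- c)"
    unfolding q_def using assms by auto
  have "(1 - x) * f_partial_sum x n \<le> (1 - x) * (dyadic_layers J x + 2 ^ J * (q / (1 - q)\<^sup>2))"
    unfolding q_def using assms by (intro mult_left_mono f_partial_sum_le_dyadic_layers) auto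
  also have "\<dots> = (1 - x) * dyadic_layers J x + c * (q / (1 - q)\<^sup>2)"
    unfolding c_def by (simp add: distrib_left mult_ac)
  also have "\<dots> \<le> J / 2 + 10 / 9"
    using dyadic_layers_le mult_div_one_minus_square_le q assms unfolding c_def by (intro add_mono) auto
  finally show ?thesis .
qed

lemma exp_ln_log_constant_ge: "19 / 10 \<le> 1 / exp 1 + 1 / ln 2 + 1 / 2 * log 2 (ln 16)"
proof -
  have "36 / 25 \<le> 1 / ln (2::real)"
    using ln2_le_25_over_36 ln2_ge_two_thirds by (simp add: field_simps)
  moreover have "ln (16::real) = 4 * ln 2"
    using ln_realpow[of 2 4] by simp
  then have "1 \<le> log 2 (ln (16::real))"
    using ln2_ge_two_thirds by (simp add: le_log_iff)
  moreover have "0 \<le> 1 / exp (1::real)"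
    by simp
  ultimately show ?thesis by linarith
qed

theorem lemma6:
  fixes \<gamma> :: real
  assumes "0 \<le> \<gamma>" and "\<gamma> < 1"
  shows "(\<Sum>k. \<gamma> ^ (Suc k) * real (f (Suc k)))
    \<le> 1 / (1 - \<gamma>) * (1 / exp 1 + 1 / ln 2 + 1/2 * log 2 (ln 16)
                        + 1/2 * log 2 (1 / (1 - \<gamma>)))"
    (is "suminf ?a \<le> 1 / (1 - \<gamma>) * (?K + 1/2 * ?L)")
proof -
  obtain J where J: "1 / (1 - \<gamma>) \<le> 2 ^ J" "J < ?L + 1"
    using ex_power2_ge_with_log_bound[of "1 / (1 - \<gamma>)"] assms by auto
  have partial: "(\<Sum>k<n. ?a k) \<le> 1 / (1 - \<gamma>) * (?K + 1/2 * ?L)" for n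
  proof -
    have "(1 - \<gamma>) * f_partial_sum \<gamma> n \<le> J / 2 + 10 / 9"
      using one_minus_mult_f_partial_sum_le J assms by (simp add: field_simps)
    also have "\<dots> \<le> ?K + 1/2 * ?L"
      using J exp_ln_log_constant_ge by linarith
    finally show ?thesis
      using assms by (simp add: f_partial_sum_def field_simps)
  qed
  have "summable ?a"
    using partial[of "Suc _"] assms by (intro bounded_imp_summable) (auto simp: lessThan_Suc_atMost)
  then show ?thesis
    using partial by (rule suminf_le_const)
qed

end
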